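(* For positive integers $i$ and $k$, let $$c_k(i)=\frac{i+3k}{i+k}\binom{i+k}{2k}-\binom{i}{k}.$$ Then $c_k(i)\geq0$ for all $i\ge1$ and $k\geq1$.
   Context: Ordinary binomial coefficients, with $\binom{n}{m}=0$ when $m<0$ or $m>n$. *)

theory Defs
  imports Complex_Main
begin

definition c_coeff :: "nat \<Rightarrow> nat \<Rightarrow> real" where
  "c_coeff k i = (real (i + 3*k) / real (i + k)) * real ((i + k) choose (2*k)) - real (i choose k)"

end

theory Submission
  imports Defs
begin

lemma choose_le_add_choose_double: "(i::nat) choose k \<le> (i + k) choose (2 * k)"
proof (cases "k \<le> i")
  case True
  have "i choose k = i choose (i - k)"
    using binomial_symmetric[OF True] .
  also have "\<dots> \<le> (i + k) choose (i - k)"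
    by (rule binomial_right_mono) simp
  also have "\<dots> = (i + k) choose (2 * k)"
    using binomial_symmetric[of "i - k" "i + k"] True by (simp add: mult_2)
  finally show ?thesis .
next
  case False
  then show ?thesis by (simp add: binomial_eq_0)
qed

theorem lemma3:
  fixes i k :: nat
  assumes "i \<ge> 1" and "k \<ge> 1"
  shows "c_coeff k i \<ge> 0"
proof -
  let ?C = "real ((i + k) choose (2 * k))"
  have factor_ge_1: "real (i + 3 * k) / real (i + k) \<ge> 1"
    using assms by simp
  have "real (i choose k) \<le> ?C"
    using choose_le_add_choose_double[of i k] by linarith
  also have "\<dots> \<le> real (i + 3 * k) / real (i + k) * ?C"
    using mult_right_mono[OF factor_ge_1, of ?C] by simp
  finally show ?thesis
    unfolding c_coeff_def by simp
qed

end
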